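(* Consider CAV $i$ and its immediately preceding CAV $i_p$ on the same road, in the setting of the context, under assumptions (A1), (SA) and (A3). Suppose that at each sampling time the control applied on $[t,t+\Delta t)$ is a feasible point of QP$_1(t)$ whenever QP$_1(t)$ is feasible. Then QP$_1(t_i^0+k\Delta t)$ is feasible for every integer $k\ge 0$ with $[t_i^0+k\Delta t,\,t_i^0+(k+1)\Delta t]\subset[t_i^0,t_i^m]$.
   Context: **Vehicle model and times.** The vehicle dynamics are $\dot x_i=v_i$ and $\dot v_i=u_i$, where $x_i$ is the position, $v_i$ the speed and $u_i$ the acceleration (the control). CAV $i$ enters the control zone at time $t_i^0$ and reaches the merging point at time $t_i^m$. The preceding CAV $i_p$ has position $x_{i_p}$, speed $v_{i_p}$ and acceleration $u_{i_p}$, which are known to CAV $i$. Let $z_{i,i_p}=x_{i_p}-x_i$, and let $\varphi>0$, $\delta$ and $k_1>0$ be constants. **Control bounds.** Control bounds are $u_{\min}\le u_i\le u_{i,\max}$ with $u_{\min}<0<u_{i,\max}$. **(A1) Common minimum acceleration.** Every CAV has the same minimum acceleration $u_{\min}$. In particular $u_{i_p}(t)\ge u_{\min}$ for all $t$. **Functions of time:** - Safety function: $b_1=z_{i,i_p}-\varphi v_i-\delta$. - CBF constraint: $b_{\mathrm{cbf}_1}(u_i)=v_{i_p}-v_i-\varphi u_i+k_1 b_1\ge 0$. - Feasibility function: $b_F=v_{i_p}-v_i+k_1b_1-\varphi u_{\min}$. - Auxiliary function: $b_{\eta_1}=v_{i_p}-v_i-\varphi u_{\min}$. - Feasibility constraint: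 $\eta_1(u_i)=u_{i_p}-u_i+k_1 b_{\eta_1}\ge 0$. Note that $\eta_1=\dot b_{\eta_1}+k_1b_{\eta_1}$ and $\dot b_F+k_1 b_F=\eta_1+k_1 b_{\mathrm{cbf}_1}$. **QP$_1(t)$.** QP$_1(t)$ is the quadratic program in the variables $(u_i,e_i)$ that minimizes $\beta e_i^2+\tfrac12(u_i-u_{\mathrm{ref}}(t))^2$ subject to: - $b_{\mathrm{cbf}_1}(u_i)\ge0$, - $u_{\min}\le u_i\le u_{i,\max}$, - $\eta_1(u_i)\ge0$, - a control Lyapunov constraint $c_1(t)+c_2(t)u_i\le e_i$ with a free slack variable $e_i$. All quantities are evaluated at time $t$. "Feasible" means the constraint set is nonempty. **(SA) Sampling / forward invariance.** The control is held constant on each $[t,t+\Delta t)$, and $\Delta t$ is small enough that for each $b\in\{b_1,b_F,b_{\eta_1}\}$: if $b(t)\ge0$ and $\dot b(t)+k_1b(t)\ge0$ under the applied controls, then $b(t+\Delta t)\ge0$. **(A3) Initial conditions.** $b_1(t_i^0)\ge0$, $b_F(t_i^0)\ge0$ and $b_{\eta_1}(t_i^0)\ge 0$. *)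

theory Defs
  imports Complex_Main
begin

text \<open>Functions of time for CAV i and its preceding CAV i_p.
  xp, vp, up: position, speed, acceleration of i_p; x, v, u: those of i.\<close>

definition b1 :: "real \<Rightarrow> real \<Rightarrow> (real \<Rightarrow> real) \<Rightarrow> (real \<Rightarrow> real) \<Rightarrow> (real \<Rightarrow> real) \<Rightarrow> real \<Rightarrow> real" where
  "b1 \<phi> \<delta> xp x v t = (xp t - x t) - \<phi> * v t - \<delta>"

definition b_cbf1 :: "real \<Rightarrow> real \<Rightarrow> real \<Rightarrow> (real \<Rightarrow> real) \<Rightarrow> (real \<Rightarrow> real) \<Rightarrow> (real \<Rightarrow> real) \<Rightarrow> (real \<Rightarrow> real) \<Rightarrow> real \<Rightarrow> real \<Rightarrow> real" where
  "b_cbf1 \<phi> \<delta> k1 xp vp x v t w = vp t - v t - \<phi> * w + k1 * b1 \<phi> \<delta> xp x v t"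

definition bF :: "real \<Rightarrow> real \<Rightarrow> real \<Rightarrow> real \<Rightarrow> (real \<Rightarrow> real) \<Rightarrow> (real \<Rightarrow> real) \<Rightarrow> (real \<Rightarrow> real) \<Rightarrow> (real \<Rightarrow> real) \<Rightarrow> real \<Rightarrow> real" where
  "bF \<phi> \<delta> k1 umin xp vp x v t = vp t - v t + k1 * b1 \<phi> \<delta> xp x v t - \<phi> * umin"

definition b_eta1 :: "real \<Rightarrow> real \<Rightarrow> (real \<Rightarrow> real) \<Rightarrow> (real \<Rightarrow> real) \<Rightarrow> real \<Rightarrow> real" where
  "b_eta1 \<phi> umin vp v t = vp t - v t - \<phi> * umin"

definition eta1 :: "real \<Rightarrow> real \<Rightarrow> real \<Rightarrow> (real \<Rightarrow> real) \<Rightarrow> (real \<Rightarrow> real) \<Rightarrow> (real \<Rightarrow> real) \<Rightarrow> real \<Rightarrow> real \<Rightarrow> real" where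
  "eta1 \<phi> k1 umin up vp v t w = up t - w + k1 * b_eta1 \<phi> umin vp v t"

text \<open>Constraint set of QP_1(t), in the variables (w, e) = (u_i, e_i).\<close>
definition QP1_constraints :: "real \<Rightarrow> real \<Rightarrow> real \<Rightarrow> real \<Rightarrow> real \<Rightarrow>
    (real \<Rightarrow> real) \<Rightarrow> (real \<Rightarrow> real) \<Rightarrow> (real \<Rightarrow> real) \<Rightarrow> (real \<Rightarrow> real) \<Rightarrow> (real \<Rightarrow> real) \<Rightarrow>
    (real \<Rightarrow> real) \<Rightarrow> (real \<Rightarrow> real) \<Rightarrow> real \<Rightarrow> real \<Rightarrow> real \<Rightarrow> bool" where
  "QP1_constraints \<phi> \<delta> k1 umin umax xp vp up x v c1 c2 t w e \<longleftrightarrow>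
     b_cbf1 \<phi> \<delta> k1 xp vp x v t w \<ge> 0 \<and> umin \<le> w \<and> w \<le> umax \<and>
     eta1 \<phi> k1 umin up vp v t w \<ge> 0 \<and> c1 t + c2 t * w \<le> e"

definition QP1_feasible :: "real \<Rightarrow> real \<Rightarrow> real \<Rightarrow> real \<Rightarrow> real \<Rightarrow>
    (real \<Rightarrow> real) \<Rightarrow> (real \<Rightarrow> real) \<Rightarrow> (real \<Rightarrow> real) \<Rightarrow> (real \<Rightarrow> real) \<Rightarrow> (real \<Rightarrow> real) \<Rightarrow>
    (real \<Rightarrow> real) \<Rightarrow> (real \<Rightarrow> real) \<Rightarrow> real \<Rightarrow> bool" where
  "QP1_feasible \<phi> \<delta> k1 umin umax xp vp up x v c1 c2 t \<longleftrightarrow>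
     (\<exists>w e. QP1_constraints \<phi> \<delta> k1 umin umax xp vp up x v c1 c2 t w e)"

end

theory Submission
  imports Defs
begin

(* Since the preceding vehicle cannot brake harder than umin (A1), hard braking u_i = umin
   is a feasible point of QP_1(t) as soon as b_F(t) >= 0 and b_eta1(t) >= 0: then
   b_cbf1(umin) = b_F and eta_1(umin) >= k_1 b_eta1.  Conversely every feasible control
   satisfies eta_1 >= 0 and b_cbf1 >= 0, which are exactly the CBF conditions for b_eta1 and,
   through d/dt b_F + k_1 b_F = eta_1 + k_1 b_cbf1, for b_F.  So (SA) carries b_F, b_eta1 >= 0
   from one sampling time to the next, and induction from (A3) gives feasibility at all of them.
   The dynamics enter only through (SA). *)

lemma QP1_feasible_braking:
  assumes "bF \<phi> \<delta> k1 umin xp vp x v t \<ge> 0" "b_eta1 \<phi> umin vp v t \<ge> 0"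
    and "up t \<ge> umin" "k1 \<ge> 0" "umin \<le> umax"
  shows "QP1_constraints \<phi> \<delta> k1 umin umax xp vp up x v c1 c2 t umin (c1 t + c2 t * umin)"
proof -
  have "k1 * b_eta1 \<phi> umin vp v t \<ge> 0"
    using assms(2,4) by simp
  then show ?thesis
    using assms unfolding QP1_constraints_def
    by (auto simp: b_cbf1_def bF_def eta1_def)
qed

corollary QP1_feasible_if_bF_b_eta1_nonneg:
  assumes "bF \<phi> \<delta> k1 umin xp vp x v t \<ge> 0" "b_eta1 \<phi> umin vp v t \<ge> 0"
    and "up t \<ge> umin" "k1 \<ge> 0" "umin \<le> umax"
  shows "QP1_feasible \<phi> \<delta> k1 umin umax xp vp up x v c1 c2 t"
  unfolding QP1_feasible_def by (rule exI)+ (rule QP1_feasible_braking; fact assms)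

lemma bF_cbf_eq:
  "(up t - w + k1 * (vp t - v t - \<phi> * w)) + k1 * bF \<phi> \<delta> k1 umin xp vp x v t
     = eta1 \<phi> k1 umin up vp v t w + k1 * b_cbf1 \<phi> \<delta> k1 xp vp x v t w"
  by (simp add: eta1_def b_cbf1_def bF_def b_eta1_def algebra_simps)

lemma QP1_constraints_cbf_conditions:
  assumes "QP1_constraints \<phi> \<delta> k1 umin umax xp vp up x v c1 c2 t w e" "k1 \<ge> 0"
  shows "(up t - w) + k1 * b_eta1 \<phi> umin vp v t \<ge> 0"
    and "(up t - w + k1 * (vp t - v t - \<phi> * w)) + k1 * bF \<phi> \<delta> k1 umin xp vp x v t \<ge> 0"
proof -
  have eta: "eta1 \<phi> k1 umin up vp v t w \<ge> 0" and cbf: "b_cbf1 \<phi> \<delta> k1 xp vp x v t w \<ge> 0"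
    using assms(1) unfolding QP1_constraints_def by auto
  show "(up t - w) + k1 * b_eta1 \<phi> umin vp v t \<ge> 0"
    using eta unfolding eta1_def by simp
  show "(up t - w + k1 * (vp t - v t - \<phi> * w)) + k1 * bF \<phi> \<delta> k1 umin xp vp x v t \<ge> 0"
    unfolding bF_cbf_eq using eta cbf assms(2) by simp
qed

theorem theorem2:
  fixes x v u xp vp up c1 c2 :: "real \<Rightarrow> real"
    and \<phi> \<delta> k1 umin umax dt t0 tm :: real
  assumes phi_pos: "\<phi> > 0" and k1_pos: "k1 > 0" and dt_pos: "dt > 0"
    and bounds: "umin < 0" "0 < umax"
    (* vehicle dynamics; the controls are held on [t, t+dt), so v, vp have right derivatives *)
    and dyn_x: "\<forall>t. (x has_real_derivative v t) (at t)"
    and dyn_v: "\<forall>t. (v has_real_derivative u t) (at_right t)"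
    and dyn_xp: "\<forall>t. (xp has_real_derivative vp t) (at t)"
    and dyn_vp: "\<forall>t. (vp has_real_derivative up t) (at_right t)"
    and A1: "\<forall>t. up t \<ge> umin"
    (* (SA), at every sampling time t0 + k dt, with the derivatives written out *)
    and SA_b1: "\<forall>k::nat. let t = t0 + real k * dt in
        b1 \<phi> \<delta> xp x v t \<ge> 0 \<and>
        (vp t - v t - \<phi> * u t) + k1 * b1 \<phi> \<delta> xp x v t \<ge> 0
        \<longrightarrow> b1 \<phi> \<delta> xp x v (t + dt) \<ge> 0"
    and SA_bF: "\<forall>k::nat. let t = t0 + real k * dt in
        bF \<phi> \<delta> k1 umin xp vp x v t \<ge> 0 \<and>
        (up t - u t + k1 * (vp t - v t - \<phi> * u t)) + k1 * bF \<phi> \<delta> k1 umin xp vp x v t \<ge> 0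
        \<longrightarrow> bF \<phi> \<delta> k1 umin xp vp x v (t + dt) \<ge> 0"
    and SA_beta: "\<forall>k::nat. let t = t0 + real k * dt in
        b_eta1 \<phi> umin vp v t \<ge> 0 \<and>
        (up t - u t) + k1 * b_eta1 \<phi> umin vp v t \<ge> 0
        \<longrightarrow> b_eta1 \<phi> umin vp v (t + dt) \<ge> 0"
    and A3: "b1 \<phi> \<delta> xp x v t0 \<ge> 0" "bF \<phi> \<delta> k1 umin xp vp x v t0 \<ge> 0"
            "b_eta1 \<phi> umin vp v t0 \<ge> 0"
    and hold: "\<forall>k::nat. \<forall>s. t0 + real k * dt \<le> s \<and> s < t0 + real (Suc k) * dt
                 \<longrightarrow> u s = u (t0 + real k * dt)"
    and applied: "\<forall>k::nat. let t = t0 + real k * dt in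
        QP1_feasible \<phi> \<delta> k1 umin umax xp vp up x v c1 c2 t \<longrightarrow>
        (\<exists>e. QP1_constraints \<phi> \<delta> k1 umin umax xp vp up x v c1 c2 t (u t) e)"
  shows "\<forall>k::nat. t0 \<le> t0 + real k * dt \<and> t0 + real (Suc k) * dt \<le> tm \<longrightarrow>
           QP1_feasible \<phi> \<delta> k1 umin umax xp vp up x v c1 c2 (t0 + real k * dt)"
proof -
  define T where "T k = t0 + real k * dt" for k :: nat
  have feasible: "QP1_feasible \<phi> \<delta> k1 umin umax xp vp up x v c1 c2 t"
    if "bF \<phi> \<delta> k1 umin xp vp x v t \<ge> 0" "b_eta1 \<phi> umin vp v t \<ge> 0" for t
    using QP1_feasible_if_bF_b_eta1_nonneg[OF that] A1 k1_pos bounds by simp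
  have invariant: "bF \<phi> \<delta> k1 umin xp vp x v (T k) \<ge> 0 \<and> b_eta1 \<phi> umin vp v (T k) \<ge> 0" for k
  proof (induction k)
    case 0
    then show ?case using A3 by (simp add: T_def)
  next
    case (Suc k)
    then obtain e where "QP1_constraints \<phi> \<delta> k1 umin umax xp vp up x v c1 c2 (T k) (u (T k)) e"
      using feasible applied unfolding T_def Let_def by blast
    note cbf = QP1_constraints_cbf_conditions[OF this less_imp_le[OF k1_pos]]
    have "bF \<phi> \<delta> k1 umin xp vp x v (T k + dt) \<ge> 0" "b_eta1 \<phi> umin vp v (T k + dt) \<ge> 0"
      using SA_bF[rule_format, of k] SA_beta[rule_format, of k] Suc cbf
      unfolding T_def Let_def by auto
    moreover have "T (Suc k) = T k + dt" by (simp add: T_def algebra_simps)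
    ultimately show ?case by simp
  qed
  show ?thesis using invariant feasible unfolding T_def by blast
qed

end
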